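(* Let $K$ be any field, $1\le d\le n$, $N \ge n+d$, and $I = (S_N.\,e_n^d(x_1,\dots,x_n)) \subseteq K[x_1,\dots,x_N]$. Then $$(x_1 - x_{n+1})(x_2 - x_{n+2})\cdots(x_d - x_{n+d}) \in I.$$
   Context: $e_n^d(x_1,\dots,x_n)$ denotes the elementary symmetric polynomial of degree $d$ in $x_1,\dots,x_n$; $(S_N.g)$ denotes the ideal generated by the orbit of $g$ under the permutation action of $S_N$ on the variables. *)

theory Defs
  imports "HOL-Library.Poly_Mapping" "HOL-Combinatorics.Permutations"
begin

text \<open>Multivariate polynomials over K in variables x_1, x_2, ... (indexed by nat):
  a polynomial maps monomials (exponent vectors nat \<Rightarrow>0 nat) to coefficients.\<close>
type_synonym 'a mpoly = "(nat \<Rightarrow>\<^sub>0 nat) \<Rightarrow>\<^sub>0 'a"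

definition Var :: "nat \<Rightarrow> 'a::comm_ring_1 mpoly" where
  "Var i = Poly_Mapping.single (Poly_Mapping.single i 1) 1"

definition Const :: "'a::comm_ring_1 \<Rightarrow> 'a mpoly" where
  "Const c = Poly_Mapping.single 0 c"

definition vars :: "'a::comm_ring_1 mpoly \<Rightarrow> nat set" where
  "vars p = \<Union> (Poly_Mapping.keys ` Poly_Mapping.keys p)"

definition polyring :: "nat \<Rightarrow> 'a::comm_ring_1 mpoly set" where
  "polyring N = {p. vars p \<subseteq> {1..N}}"

definition perm_act :: "(nat \<Rightarrow> nat) \<Rightarrow> 'a::comm_ring_1 mpoly \<Rightarrow> 'a mpoly" where
  "perm_act \<sigma> p = (\<Sum>m\<in>Poly_Mapping.keys p.
      Const (Poly_Mapping.lookup p m) *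
      (\<Prod>i\<in>Poly_Mapping.keys m. Var (\<sigma> i) ^ Poly_Mapping.lookup m i))"

definition elem_sym :: "nat \<Rightarrow> nat \<Rightarrow> 'a::comm_ring_1 mpoly" where
  "elem_sym n d = (\<Sum>S\<in>{S. S \<subseteq> {1..n} \<and> card S = d}. \<Prod>i\<in>S. Var i)"

definition ideal_gen :: "'a::comm_ring_1 mpoly set \<Rightarrow> 'a mpoly set \<Rightarrow> 'a mpoly set" where
  "ideal_gen R G = {(\<Sum>g\<in>T. r g * g) | T r. finite T \<and> T \<subseteq> G \<and> (\<forall>g\<in>T. r g \<in> R)}"

definition orbit_ideal :: "nat \<Rightarrow> 'a::comm_ring_1 mpoly \<Rightarrow> 'a mpoly set" where
  "orbit_ideal N g = ideal_gen (polyring N) {perm_act \<sigma> g | \<sigma>. \<sigma> permutes {1..N}}"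

end

theory Submission
  imports Defs
begin

text \<open>Let \<open>P_j = (x_1 - x_{n+1}) \<cdots> (x_j - x_{n+j}) \<cdot> e_{d-j}(x_{j+1}, \<dots>, x_n)\<close>, so that
  \<open>P_0 = e_n^d\<close> and \<open>P_d\<close> is the product in question. Splitting the elementary symmetric
  factor according to whether a monomial contains \<open>x_{j+1}\<close> gives \<open>P_j - \<tau> P_j = P_{j+1}\<close>,
  where \<open>\<tau>\<close> transposes \<open>x_{j+1}\<close> and \<open>x_{n+j+1}\<close>: the part without \<open>x_{j+1}\<close> is
  \<open>\<tau>\<close>-invariant and cancels. The identity holds for every substitution of the variables, so
  every permuted copy of \<open>P_{j+1}\<close> is a difference of two permuted copies of \<open>P_j\<close>, and
  induction on \<open>j\<close> places \<open>P_d\<close> in the ideal generated by the permuted copies of \<open>e_n^d\<close>.\<close>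

definition esym :: "'b set \<Rightarrow> nat \<Rightarrow> ('b \<Rightarrow> 'a::comm_ring_1) \<Rightarrow> 'a" where
  "esym A k h = (\<Sum>S\<in>{S. S \<subseteq> A \<and> card S = k}. \<Prod>i\<in>S. h i)"

lemma esym_0: "finite A \<Longrightarrow> esym A 0 h = 1"
proof -
  assume "finite A"
  then have "{S. S \<subseteq> A \<and> card S = 0} = {{}}" by (auto dest: finite_subset)
  then show ?thesis by (simp add: esym_def)
qed

lemma esym_cong: "(\<And>i. i \<in> A \<Longrightarrow> h i = h' i) \<Longrightarrow> esym A k h = esym A k h'"
  unfolding esym_def by (intro sum.cong refl prod.cong) auto

lemma esym_insert_Suc:
  assumes "finite A" "a \<notin> A"
  shows "esym (insert a A) (Suc k) h = h a * esym A k h + esym A (Suc k) h"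
proof -
  let ?sets = "\<lambda>k. {S. S \<subseteq> A \<and> card S = k}"
  have split: "{S. S \<subseteq> insert a A \<and> card S = Suc k} = insert a ` ?sets k \<union> ?sets (Suc k)"
  proof (intro set_eqI iffI)
    fix S assume S: "S \<in> {S. S \<subseteq> insert a A \<and> card S = Suc k}"
    then have "finite S" using assms(1) by (auto dest: finite_subset)
    with S show "S \<in> insert a ` ?sets k \<union> ?sets (Suc k)"
      by (cases "a \<in> S") (auto intro!: image_eqI[of S "insert a" "S - {a}"])
  next
    fix S assume "S \<in> insert a ` ?sets k \<union> ?sets (Suc k)"
    with assms show "S \<in> {S. S \<subseteq> insert a A \<and> card S = Suc k}"
      by (auto simp: card_insert_if finite_subset subsetD)
  qed
  have inj: "inj_on (insert a) (?sets k)"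
    using assms(2) by (auto simp: inj_on_def)
  have "esym (insert a A) (Suc k) h = (\<Sum>S\<in>insert a ` ?sets k. \<Prod>i\<in>S. h i) + esym A (Suc k) h"
    unfolding esym_def split using assms by (intro sum.union_disjoint) auto
  also have "(\<Sum>S\<in>insert a ` ?sets k. \<Prod>i\<in>S. h i) = (\<Sum>S\<in>?sets k. \<Prod>i\<in>insert a S. h i)"
    by (rule sum.reindex[OF inj, unfolded comp_def])
  also have "\<dots> = (\<Sum>S\<in>?sets k. h a * (\<Prod>i\<in>S. h i))"
    using assms by (intro sum.cong refl prod.insert) (auto dest: finite_subset)
  finally show ?thesis by (simp add: esym_def sum_distrib_left)
qed

lemma ideal_gen_generator: "1 \<in> R \<Longrightarrow> g \<in> G \<Longrightarrow> g \<in> ideal_gen R G"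
  unfolding ideal_gen_def by (intro CollectI exI[of _ "{g}"] exI[of _ "\<lambda>_. 1"]) simp

lemma ideal_gen_diff:
  assumes "0 \<in> R" and diff_closed: "\<And>a b. a \<in> R \<Longrightarrow> b \<in> R \<Longrightarrow> a - b \<in> R"
    and "p \<in> ideal_gen R G" "q \<in> ideal_gen R G"
  shows "p - q \<in> ideal_gen R G"
proof -
  obtain T1 r1 where T1: "p = (\<Sum>g\<in>T1. r1 g * g)" "finite T1" "T1 \<subseteq> G" "\<forall>g\<in>T1. r1 g \<in> R"
    using assms(3) unfolding ideal_gen_def by blast
  obtain T2 r2 where T2: "q = (\<Sum>g\<in>T2. r2 g * g)" "finite T2" "T2 \<subseteq> G" "\<forall>g\<in>T2. r2 g \<in> R"
    using assms(4) unfolding ideal_gen_def by blast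
  define s1 where "s1 g = (if g \<in> T1 then r1 g else 0)" for g
  define s2 where "s2 g = (if g \<in> T2 then r2 g else 0)" for g
  have "p = (\<Sum>g\<in>T1 \<union> T2. s1 g * g)"
    unfolding T1 using T1 T2 by (intro sum.mono_neutral_cong_left) (auto simp: s1_def)
  moreover have "q = (\<Sum>g\<in>T1 \<union> T2. s2 g * g)"
    unfolding T2 using T1 T2 by (intro sum.mono_neutral_cong_left) (auto simp: s2_def)
  ultimately have "p - q = (\<Sum>g\<in>T1 \<union> T2. (s1 g - s2 g) * g)"
    by (simp add: sum_subtractf left_diff_distrib)
  moreover have "s1 g - s2 g \<in> R" for g
  proof (rule diff_closed)
    show "s1 g \<in> R" "s2 g \<in> R"
      using T1(4) T2(4) assms(1) by (simp_all add: s1_def s2_def)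
  qed
  ultimately show ?thesis
    unfolding ideal_gen_def using T1(2,3) T2(2,3)
    by (intro CollectI exI[of _ "T1 \<union> T2"] exI[of _ "\<lambda>g. s1 g - s2 g"]) auto
qed

lemma vars_diff: "vars (p - q) \<subseteq> vars p \<union> vars q"
  unfolding vars_def using keys_diff[of p q] by auto

lemma polyring_diff: "p \<in> polyring N \<Longrightarrow> q \<in> polyring N \<Longrightarrow> p - q \<in> polyring N"
  unfolding polyring_def using vars_diff by blast

lemma zero_in_polyring: "0 \<in> polyring N"
  by (simp add: polyring_def vars_def)

lemma one_in_polyring: "1 \<in> polyring N"
  by (simp add: polyring_def vars_def)

lemma perm_act_in_orbit_ideal: "\<sigma> permutes {1..N} \<Longrightarrow> perm_act \<sigma> g \<in> orbit_ideal N g"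
  unfolding orbit_ideal_def using one_in_polyring by (intro ideal_gen_generator) auto

lemma orbit_ideal_diff:
  "p \<in> orbit_ideal N g \<Longrightarrow> q \<in> orbit_ideal N g \<Longrightarrow> p - q \<in> orbit_ideal N g"
  unfolding orbit_ideal_def
  by (rule ideal_gen_diff) (simp_all add: zero_in_polyring polyring_diff)

definition set_monom :: "nat set \<Rightarrow> (nat \<Rightarrow>\<^sub>0 nat)" where
  "set_monom S = (\<Sum>i\<in>S. Poly_Mapping.single i 1)"

lemma lookup_set_monom:
  "finite S \<Longrightarrow> Poly_Mapping.lookup (set_monom S) j = (if j \<in> S then 1 else 0)"
  unfolding set_monom_def lookup_sum lookup_single by (simp add: when_def)

lemma keys_set_monom: "finite S \<Longrightarrow> Poly_Mapping.keys (set_monom S) = S"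
  by (auto simp: in_keys_iff lookup_set_monom split: if_splits)

lemma prod_Var_eq_single:
  "finite S \<Longrightarrow> (\<Prod>i\<in>S. Var i) = (Poly_Mapping.single (set_monom S) 1 :: 'a::comm_ring_1 mpoly)"
  by (induction S rule: finite_induct) (simp_all add: set_monom_def Var_def mult_single)

lemma perm_act_sum_single:
  assumes "finite M"
  shows "perm_act \<sigma> (\<Sum>m\<in>M. Poly_Mapping.single m (c m) :: 'a::comm_ring_1 mpoly)
     = (\<Sum>m\<in>M. Const (c m) * (\<Prod>i\<in>Poly_Mapping.keys m. Var (\<sigma> i) ^ Poly_Mapping.lookup m i))"
proof -
  define p where "p = (\<Sum>m\<in>M. Poly_Mapping.single m (c m) :: 'a mpoly)"
  have lookup_p: "Poly_Mapping.lookup p m = (if m \<in> M then c m else 0)" for m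
    unfolding p_def lookup_sum lookup_single using assms by (simp add: when_def)
  have "Poly_Mapping.keys p \<subseteq> M" by (auto simp: in_keys_iff lookup_p split: if_splits)
  then show ?thesis unfolding p_def[symmetric] perm_act_def
    by (intro sum.mono_neutral_cong_left[OF assms]) (auto simp: lookup_p in_keys_iff Const_def)
qed

lemma perm_act_elem_sym:
  "perm_act \<sigma> (elem_sym n d :: 'a::comm_ring_1 mpoly) = esym {1..n} d (\<lambda>i. Var (\<sigma> i))"
proof -
  define sets where "sets = {S. S \<subseteq> {1..n} \<and> card S = d}"
  have "finite sets" unfolding sets_def by simp
  have fin: "S \<in> sets \<Longrightarrow> finite S" for S unfolding sets_def using finite_subset by auto
  have inj: "inj_on set_monom sets"
  proof (rule inj_onI)
    fix S T assume "S \<in> sets" "T \<in> sets" "set_monom S = set_monom T"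
    then show "S = T" using keys_set_monom fin by metis
  qed
  have "elem_sym n d = (\<Sum>S\<in>sets. Poly_Mapping.single (set_monom S) (1::'a))"
    unfolding elem_sym_def sets_def[symmetric] by (intro sum.cong) (auto simp: prod_Var_eq_single fin)
  also have "\<dots> = (\<Sum>m\<in>set_monom ` sets. Poly_Mapping.single m 1)"
    by (simp add: sum.reindex[OF inj])
  finally have "perm_act \<sigma> (elem_sym n d :: 'a mpoly) =
     (\<Sum>m\<in>set_monom ` sets. Const 1 * (\<Prod>i\<in>Poly_Mapping.keys m. Var (\<sigma> i) ^ Poly_Mapping.lookup m i))"
    using perm_act_sum_single[of "set_monom ` sets" \<sigma> "\<lambda>_. 1"] \<open>finite sets\<close> by simp
  also have "\<dots> = (\<Sum>S\<in>sets. \<Prod>i\<in>S. Var (\<sigma> i))"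
    by (simp add: sum.reindex[OF inj] Const_def keys_set_monom lookup_set_monom fin cong: prod.cong)
  finally show ?thesis unfolding esym_def sets_def .
qed

text \<open>\<open>diff_esym n d j h\<close> is \<open>P_j\<close> evaluated at \<open>x_i := h i\<close>.\<close>

definition diff_esym :: "nat \<Rightarrow> nat \<Rightarrow> nat \<Rightarrow> (nat \<Rightarrow> 'a::comm_ring_1) \<Rightarrow> 'a" where
  "diff_esym n d j h = (\<Prod>i\<in>{1..j}. h i - h (n + i)) * esym {Suc j..n} (d - j) h"

lemma diff_esym_Suc:
  fixes h :: "nat \<Rightarrow> 'a::comm_ring_1"
  assumes "j < d" "d \<le> n"
  shows "diff_esym n d j h - diff_esym n d j (h \<circ> transpose (Suc j) (n + Suc j))
    = diff_esym n d (Suc j) h"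
proof -
  define h' where "h' = h \<circ> transpose (Suc j) (n + Suc j)"
  have split: "esym {Suc j..n} (d - j) g = g (Suc j) * esym {Suc (Suc j)..n} (d - Suc j) g
      + esym {Suc (Suc j)..n} (Suc (d - Suc j)) g" for g :: "nat \<Rightarrow> 'a"
  proof -
    have "{Suc j..n} = insert (Suc j) {Suc (Suc j)..n}" "d - j = Suc (d - Suc j)"
      using assms by auto
    then show ?thesis by (simp only:) (rule esym_insert_Suc; simp)
  qed
  have "esym {Suc (Suc j)..n} k h' = esym {Suc (Suc j)..n} k h" for k
    by (rule esym_cong) (auto simp: h'_def)
  moreover have "(\<Prod>i\<in>{1..j}. h' i - h' (n + i)) = (\<Prod>i\<in>{1..j}. h i - h (n + i))"
    using assms by (intro prod.cong) (auto simp: h'_def)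
  moreover have "h' (Suc j) = h (n + Suc j)" by (simp add: h'_def)
  ultimately show ?thesis
    unfolding h'_def[symmetric] diff_esym_def split by (simp add: algebra_simps)
qed

lemma diff_esym_in_orbit_ideal:
  assumes "j \<le> d" "d \<le> n" "n + d \<le> N" "\<sigma> permutes {1..N}"
  shows "diff_esym n d j (\<lambda>i. Var (\<sigma> i)) \<in> orbit_ideal N (elem_sym n d :: 'a::comm_ring_1 mpoly)"
  using assms(1,4)
proof (induction j arbitrary: \<sigma>)
  case 0
  then have "perm_act \<sigma> (elem_sym n d) \<in> orbit_ideal N (elem_sym n d :: 'a mpoly)"
    by (intro perm_act_in_orbit_ideal) simp
  then show ?case by (simp add: diff_esym_def perm_act_elem_sym)
next
  case (Suc j)
  let ?\<tau> = "transpose (Suc j) (n + Suc j)"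
  have "?\<tau> permutes {1..N}"
    using Suc.prems assms by (intro permutes_swap_id) auto
  then have "\<sigma> \<circ> ?\<tau> permutes {1..N}" using Suc.prems by (intro permutes_compose)
  then have "diff_esym n d j (\<lambda>i. Var ((\<sigma> \<circ> ?\<tau>) i)) \<in> orbit_ideal N (elem_sym n d :: 'a mpoly)"
    by (rule Suc.IH[OF Suc_leD[OF Suc.prems(1)]])
  then have "diff_esym n d j (\<lambda>i. Var (\<sigma> i)) - diff_esym n d j (\<lambda>i. Var ((\<sigma> \<circ> ?\<tau>) i))
      \<in> orbit_ideal N (elem_sym n d :: 'a mpoly)"
    using Suc by (intro orbit_ideal_diff) simp_all
  also have "diff_esym n d j (\<lambda>i. Var (\<sigma> i)) - diff_esym n d j (\<lambda>i. Var ((\<sigma> \<circ> ?\<tau>) i))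
      = diff_esym n d (Suc j) (\<lambda>i. Var (\<sigma> i))"
    using diff_esym_Suc[of j d n "\<lambda>i. Var (\<sigma> i)"] Suc.prems assms by (simp add: comp_def)
  finally show ?case .
qed

theorem mainTheorem11:
  fixes n d N :: nat
  assumes "1 \<le> d" and "d \<le> n" and "n + d \<le> N"
  shows "(\<Prod>i\<in>{1..d}. Var i - Var (n + i) :: 'a::field mpoly)
           \<in> orbit_ideal N (elem_sym n d :: 'a mpoly)"
proof -
  have "diff_esym n d d (\<lambda>i. Var (id i)) \<in> orbit_ideal N (elem_sym n d :: 'a mpoly)"
    using assms by (intro diff_esym_in_orbit_ideal permutes_id) auto
  then show ?thesis by (simp add: diff_esym_def esym_0)
qed

end
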